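(* Let $\mathfrak{P}=(V,E,L_{\mathcal{A}},L_{\mathcal{C}})$ be a well-formed proof tree with a leaf $v$ such that $L_{\mathcal{A}}(v)$ is not solved, and let $\mathrm{Proc}$ be a sound processor with $\mathrm{Proc}(L_{\mathcal{A}}(v))=(c,\{\langle\mathcal{P}_1,\mathcal{S}_1\rangle,\dots,\langle\mathcal{P}_n,\mathcal{S}_n\rangle\})$. Let $\mathfrak{P}'$ result from $\mathfrak{P}$ by adding fresh nodes $w_1,\dots,w_n$ and edges $(v,w_1),\dots,(v,w_n)$, with labeling extended by $L_{\mathcal{A}}(w_i)=\langle\mathcal{P}_i,\mathcal{S}_i\rangle$ for all $1\le i\le n$ and with $L_{\mathcal{C}}(v)=c$ (and each new leaf $w_i$ labeled $\mathrm{Pol}_0$ if $\mathcal{S}_i=\emptyset$ and $\omega$ otherwise). Then $\mathfrak{P}'$ is also well formed.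
   Context: Annotated dependency pairs (ADPs): over a finite signature $\Sigma$ with defined symbols $\mathcal{D}$ and fresh annotated copies $f^\sharp$ ($f\in\mathcal{D}$), an ADP is $\ell\to\{p_1:r_1,\dots,p_k:r_k\}^m$ with $\ell$ a non-variable unannotated term, $r_j$ possibly annotated terms with $\mathcal{V}(r_j)\subseteq\mathcal{V}(\ell)$, $0<p_j\le1$, $\sum p_j=1$, and flag $m\in\{\mathsf{true},\mathsf{false}\}$. Defined symbols of a set $\mathcal{P}$ of ADPs are roots of left-hand sides; basic terms are $f(t_1,\dots,t_k)$ with $f$ defined and $t_i$ built from the other symbols and variables; $|t|$ is term size; $t^\sharp$ annotates the root. Rewriting with $\mathcal{P}$ (innermost): $s$ rewrites to $\{p_j:t_j\}$ using an ADP $\ell\to\{p_j:r_j\}^m$, a position $\pi$ with a defined or annotated symbol, and $\sigma$ with $\flat(s|_\pi)=\ell\sigma$ ($\flat$ removes annotations) whose proper subterms are normal forms; $t_j=s[r_j\sigma]_\pi$ (at: $m=\mathsf{true}$, $\pi$ annotated), $s[\flat(r_j)\sigma]_\pi$ (nt: $m=\mathsf{true}$, not annotated), $\flat^\uparrow_\pi(s[r_j\sigma]_\pi)$ (af), $\flat^\uparrow_\pi(s[\flat(r_j)\sigma]_\pi)$ (nf), with $\flat^\uparrow_\pi$ removing annotations strictly above $\pi$. $\mathcal{P}$-chain trees are possibly infinite finitely-branching trees with nodes $(p_v:t_v)$, root probability 1, $t_v$ rewriting to $\{\tfrac{p_w}{p_v}:t_w\}_{w\text{ child}}$ at inner nodes.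 For $\mathcal{S}\subseteq\mathcal{P}$, $\operatorname{edl}_{\langle\mathcal{P},\mathcal{S}\rangle}(\mathfrak{T})$ sums $p_v$ over inner nodes rewritten by (at)/(af)-steps with ADPs from $\mathcal{S}$; $\operatorname{edh}_{\langle\mathcal{P},\mathcal{S}\rangle}(t)$ is the supremum over chain trees with root $t^\sharp$; $\operatorname{eirc}_{\langle\mathcal{P},\mathcal{S}\rangle}(n)=\sup\{\operatorname{edh}_{\langle\mathcal{P},\mathcal{S}\rangle}(t)\mid t\text{ basic},|t|\le n\}$; $\iota_{\langle\mathcal{P},\mathcal{S}\rangle}=\iota(\operatorname{eirc}_{\langle\mathcal{P},\mathcal{S}\rangle})$. Complexities $\mathfrak{C}=\{\mathrm{Pol}_0,\mathrm{Pol}_1,\dots,\mathrm{Exp},\mathrm{2\text{-}Exp},\mathrm{Fin},\omega\}$ ordered $\mathrm{Pol}_0\sqsubset\mathrm{Pol}_1\sqsubset\dots\sqsubset\mathrm{Exp}\sqsubset\mathrm{2\text{-}Exp}\sqsubset\mathrm{Fin}\sqsubset\omega$, $\oplus$ = maximum; $\iota(f)=\mathrm{Pol}_a$ for least $a$ with $f\in O(n^a)$, else $\mathrm{Exp}$ if $f\in O(2^{\mathrm{pol}(n)})$, else $\mathrm{2\text{-}Exp}$ if $f\in O(2^{2^{\mathrm{pol}(n)}})$, else $\mathrm{Fin}$ if $f$ never equals $\omega$, else $\omega$. ADP problem: $\langle\mathcal{P},\mathcal{S}\rangle$, $\mathcal{P}$ finite set of ADPs, $\mathcal{S}\subseteq\mathcal{P}$;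 solved if $\mathcal{S}=\emptyset$. A processor maps an ADP problem to $(c,\{\langle\mathcal{P}_1,\mathcal{S}_1\rangle,\dots,\langle\mathcal{P}_n,\mathcal{S}_n\rangle\})$ with $c\in\mathfrak{C}$. A proof tree is a finite tree $(V,E,L_{\mathcal{A}},L_{\mathcal{C}})$, $L_{\mathcal{A}}$ labeling nodes by ADP problems, $L_{\mathcal{C}}$ by complexities, such that for each inner node $v$ with children $w_1,\dots,w_n$ some processor maps $L_{\mathcal{A}}(v)$ to $(L_{\mathcal{C}}(v),\{L_{\mathcal{A}}(w_i)\}_i)$, and each leaf has $L_{\mathcal{C}}=\mathrm{Pol}_0$ if its problem is solved and $\omega$ otherwise. It is well formed if for each node $v$ with $L_{\mathcal{A}}(v)=\langle\mathcal{P},\mathcal{S}\rangle$ and root path $v_1,\dots,v_k=v$: $\iota_{\langle\mathcal{P},\mathcal{S}\rangle}\sqsubseteq L_{\mathcal{C}}(v_1)\oplus\dots\oplus L_{\mathcal{C}}(v_{k-1})\oplus\max\{L'_{\mathcal{C}}(w)\mid w$ reachable from $v$, including $v\}$ and $\iota_{\langle\mathcal{P},\mathcal{P}\setminus\mathcal{S}\rangle}\sqsubseteq L_{\mathcal{C}}(v_1)\oplus\dots\oplus L_{\mathcal{C}}(v_{k-1})$, where $L'_{\mathcal{C}}(w)=L_{\mathcal{C}}(w)$ for inner nodes and $\iota_{L_{\mathcal{A}}(w)}$ for leaves (empty $\oplus$ is $\mathrm{Pol}_0$). A processor $\mathrm{Proc}$ with $\mathrm{Proc}(\langle\mathcal{P},\mathcal{S}\rangle)=(c,\{\langle\mathcal{P}_1,\mathcal{S}_1\rangle,\dots,\langle\mathcal{P}_n,\mathcal{S}_n\rangle\})$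 is sound if for every well-formed proof tree and every node $v$ with $L_{\mathcal{A}}(v)=\langle\mathcal{P},\mathcal{S}\rangle$ and root path $v_1,\dots,v_k=v$: (1) $\iota_{\langle\mathcal{P},\mathcal{S}\rangle}\sqsubseteq L_{\mathcal{C}}(v_1)\oplus\dots\oplus L_{\mathcal{C}}(v_{k-1})\oplus c\oplus\iota_{\langle\mathcal{P}_1,\mathcal{S}_1\rangle}\oplus\dots\oplus\iota_{\langle\mathcal{P}_n,\mathcal{S}_n\rangle}$ and (2) $\iota_{\langle\mathcal{P}_i,\mathcal{P}_i\setminus\mathcal{S}_i\rangle}\sqsubseteq L_{\mathcal{C}}(v_1)\oplus\dots\oplus L_{\mathcal{C}}(v_{k-1})\oplus c$ for all $1\le i\le n$. *)

theory Defs
  imports "HOL-Analysis.Analysis" "HOL-Computational_Algebra.Polynomial"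
begin

section \<open>Terms with annotations\<close>

text \<open>The boolean flag of Fun
  is true iff the symbol is annotated (f sharp).\<close>

datatype 'f aterm = Var nat | Fun 'f bool "'f aterm list"

fun unann :: "'f aterm \<Rightarrow> 'f aterm" where
  "unann (Var x) = Var x"
| "unann (Fun f b ts) = Fun f False (map unann ts)"

fun sharp :: "'f aterm \<Rightarrow> 'f aterm" where
  "sharp (Var x) = Var x"
| "sharp (Fun f b ts) = Fun f True ts"

fun is_ann :: "'f aterm \<Rightarrow> bool" where
  "is_ann (Var x) = False"
| "is_ann (Fun f b ts) = b"

fun root :: "'f aterm \<Rightarrow> 'f option" where
  "root (Var x) = None"
| "root (Fun f b ts) = Some f"

fun subst :: "(nat \<Rightarrow> 'f aterm) \<Rightarrow> 'f aterm \<Rightarrow> 'f aterm" where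
  "subst \<sigma> (Var x) = \<sigma> x"
| "subst \<sigma> (Fun f b ts) = Fun f b (map (subst \<sigma>) ts)"

fun vars :: "'f aterm \<Rightarrow> nat set" where
  "vars (Var x) = {x}"
| "vars (Fun f b ts) = (\<Union>t\<in>set ts. vars t)"

fun tsize :: "'f aterm \<Rightarrow> nat" where
  "tsize (Var x) = 1"
| "tsize (Fun f b ts) = 1 + sum_list (map tsize ts)"

function poss :: "'f aterm \<Rightarrow> nat list set" where
  "poss (Var x) = {[]}"
| "poss (Fun f b ts) = insert [] (\<Union>i\<in>{..<length ts}. (\<lambda>p. i # p) ` poss (ts ! i))"
  by pat_completeness auto
termination
  by (relation "Wellfounded.measure size") (auto simp: less_Suc_eq_le intro!: size_list_estimation' nth_mem)

fun subt_at :: "'f aterm \<Rightarrow> nat list \<Rightarrow> 'f aterm" where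
  "subt_at t [] = t"
| "subt_at (Fun f b ts) (i # p) = subt_at (ts ! i) p"
| "subt_at (Var x) (i # p) = Var x"

fun replace_at :: "'f aterm \<Rightarrow> nat list \<Rightarrow> 'f aterm \<Rightarrow> 'f aterm" where
  "replace_at t [] s = s"
| "replace_at (Fun f b ts) (i # p) s = Fun f b (ts[i := replace_at (ts ! i) p s])"
| "replace_at (Var x) (i # p) s = Var x"

fun unann_above :: "'f aterm \<Rightarrow> nat list \<Rightarrow> 'f aterm" where
  "unann_above t [] = t"
| "unann_above (Fun f b ts) (i # p) = Fun f False (ts[i := unann_above (ts ! i) p])"
| "unann_above (Var x) (i # p) = Var x"

fun wf_term :: "('f \<Rightarrow> nat) \<Rightarrow> 'f set \<Rightarrow> 'f aterm \<Rightarrow> bool" where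
  "wf_term ar D (Var x) = True"
| "wf_term ar D (Fun f b ts) = (length ts = ar f \<and> (b \<longrightarrow> f \<in> D) \<and> (\<forall>t\<in>set ts. wf_term ar D t))"

section \<open>Annotated dependency pairs\<close>

datatype 'f adp = ADP (lhs: "'f aterm") (rhss: "(real \<times> 'f aterm) list") (flag: bool)

definition valid_adp :: "('f \<Rightarrow> nat) \<Rightarrow> 'f set \<Rightarrow> 'f adp \<Rightarrow> bool" where
  "valid_adp ar D a \<longleftrightarrow>
     wf_term ar D (lhs a) \<and> unann (lhs a) = lhs a \<and> (\<forall>x. lhs a \<noteq> Var x) \<and>
     rhss a \<noteq> [] \<and>
     (\<forall>(p, r)\<in>set (rhss a). 0 < p \<and> p \<le> 1 \<and> wf_term ar D r \<and> vars r \<subseteq> vars (lhs a)) \<and>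
     sum_list (map fst (rhss a)) = 1"

type_synonym 'f problem = "'f adp set \<times> 'f adp set"

definition valid_problem :: "('f \<Rightarrow> nat) \<Rightarrow> 'f set \<Rightarrow> 'f problem \<Rightarrow> bool" where
  "valid_problem ar D X \<longleftrightarrow> finite (fst X) \<and> snd X \<subseteq> fst X \<and> (\<forall>a\<in>fst X. valid_adp ar D a)"

definition solved :: "'f problem \<Rightarrow> bool" where
  "solved X \<longleftrightarrow> snd X = {}"

definition defs :: "'f adp set \<Rightarrow> 'f set" where
  "defs P = {f. \<exists>a\<in>P. root (lhs a) = Some f}"

definition NF :: "'f adp set \<Rightarrow> 'f aterm \<Rightarrow> bool" where
  "NF P t \<longleftrightarrow> (\<forall>q\<in>poss t. \<forall>a\<in>P. \<forall>\<sigma>. unann (subt_at t q) \<noteq> subst \<sigma> (lhs a))"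

text \<open>Innermost rewrite step of s with ADP a (from P) to the multi-distribution mu;
  ann records whether the rewritten position is annotated, i.e. whether the step is an
  (at)/(af)-step (ann = True) or an (nt)/(nf)-step (ann = False).\<close>
definition rstep :: "'f adp set \<Rightarrow> 'f aterm \<Rightarrow> 'f adp \<Rightarrow> bool \<Rightarrow> (real \<times> 'f aterm) list \<Rightarrow> bool" where
  "rstep P s a ann \<mu> \<longleftrightarrow> a \<in> P \<and>
     (\<exists>\<pi> \<sigma>. \<pi> \<in> poss s \<and>
        ((\<exists>f. root (subt_at s \<pi>) = Some f \<and> f \<in> defs P) \<or> is_ann (subt_at s \<pi>)) \<and>
        unann (subt_at s \<pi>) = subst \<sigma> (lhs a) \<and>
        (\<forall>q\<in>poss (subt_at s \<pi>). q \<noteq> [] \<longrightarrow> NF P (subt_at (subt_at s \<pi>) q)) \<and>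
        ann = is_ann (subt_at s \<pi>) \<and>
        \<mu> = map (\<lambda>(p, r).
               (p, (let s' = replace_at s \<pi> (subst \<sigma> (if ann then r else unann r))
                    in if flag a then s' else unann_above s' \<pi>))) (rhss a))"

section \<open>Chain trees\<close>

text \<open>A chain tree: node set N of positions (lists of naturals) with k v children
  v@[0],...,v@[k v - 1]; labels pr (probability) and tm (term); ru and an record the
  ADP used at inner nodes and whether the step was an (at)/(af)-step.\<close>
definition chain_tree ::
  "'f adp set \<Rightarrow> nat list set \<Rightarrow> (nat list \<Rightarrow> real) \<Rightarrow> (nat list \<Rightarrow> 'f aterm)
     \<Rightarrow> (nat list \<Rightarrow> 'f adp) \<Rightarrow> (nat list \<Rightarrow> bool) \<Rightarrow> (nat list \<Rightarrow> nat) \<Rightarrow> bool" where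
  "chain_tree P N pr tm ru an k \<longleftrightarrow>
     [] \<in> N \<and> (\<forall>v i. v @ [i] \<in> N \<longleftrightarrow> v \<in> N \<and> i < k v) \<and> pr [] = 1 \<and>
     (\<forall>v\<in>N. 0 < k v \<longrightarrow>
        rstep P (tm v) (ru v) (an v) (map (\<lambda>i. (pr (v @ [i]) / pr v, tm (v @ [i]))) [0..<k v]))"

definition edl ::
  "'f adp set \<Rightarrow> nat list set \<Rightarrow> (nat list \<Rightarrow> real)
     \<Rightarrow> (nat list \<Rightarrow> 'f adp) \<Rightarrow> (nat list \<Rightarrow> bool) \<Rightarrow> (nat list \<Rightarrow> nat) \<Rightarrow> ennreal" where
  "edl S N pr ru an k =
     (\<integral>\<^sup>+ v. (if v \<in> N \<and> 0 < k v \<and> ru v \<in> S \<and> an v then ennreal (pr v) else 0) \<partial>count_space UNIV)"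

definition edh :: "'f adp set \<Rightarrow> 'f adp set \<Rightarrow> 'f aterm \<Rightarrow> ennreal" where
  "edh P S t = Sup {edl S N pr ru an k | N pr tm ru an k.
                      chain_tree P N pr tm ru an k \<and> tm [] = sharp t}"

fun ctor_term :: "'f set \<Rightarrow> 'f aterm \<Rightarrow> bool" where
  "ctor_term F (Var x) = True"
| "ctor_term F (Fun f b ts) = (\<not> b \<and> f \<notin> F \<and> (\<forall>t\<in>set ts. ctor_term F t))"

definition basic :: "('f \<Rightarrow> nat) \<Rightarrow> 'f set \<Rightarrow> 'f adp set \<Rightarrow> 'f aterm \<Rightarrow> bool" where
  "basic ar D P t \<longleftrightarrow> wf_term ar D t \<and>
     (\<exists>f ts. t = Fun f False ts \<and> f \<in> defs P \<and> (\<forall>u\<in>set ts. ctor_term (defs P) u))"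

definition eirc :: "('f \<Rightarrow> nat) \<Rightarrow> 'f set \<Rightarrow> 'f adp set \<Rightarrow> 'f adp set \<Rightarrow> nat \<Rightarrow> ennreal" where
  "eirc ar D P S n = Sup {edh P S t | t. basic ar D P t \<and> tsize t \<le> n}"

section \<open>Complexities\<close>

datatype cplx = Pol nat | Exp | TwoExp | Fin | Omega

fun ckey :: "cplx \<Rightarrow> nat \<times> nat" where
  "ckey (Pol a) = (0, a)"
| "ckey Exp = (1, 0)"
| "ckey TwoExp = (2, 0)"
| "ckey Fin = (3, 0)"
| "ckey Omega = (4, 0)"

lemma inj_ckey: "inj ckey"
proof
  fix x y assume "ckey x = ckey y" then show "x = y"
    by (cases x; cases y) auto
qed

instantiation cplx :: linorder
begin
definition less_eq_cplx :: "cplx \<Rightarrow> cplx \<Rightarrow> bool" where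
  "less_eq_cplx x y \<longleftrightarrow>
     fst (ckey x) < fst (ckey y) \<or> (fst (ckey x) = fst (ckey y) \<and> snd (ckey x) \<le> snd (ckey y))"
definition less_cplx :: "cplx \<Rightarrow> cplx \<Rightarrow> bool" where
  "less_cplx x y \<longleftrightarrow>
     fst (ckey x) < fst (ckey y) \<or> (fst (ckey x) = fst (ckey y) \<and> snd (ckey x) < snd (ckey y))"
instance
proof
  fix x y z :: cplx
  show "x < y \<longleftrightarrow> x \<le> y \<and> \<not> y \<le> x" by (auto simp: less_eq_cplx_def less_cplx_def)
  show "x \<le> x" by (auto simp: less_eq_cplx_def)
  show "x \<le> y \<Longrightarrow> y \<le> z \<Longrightarrow> x \<le> z" by (auto simp: less_eq_cplx_def)
  show "x \<le> y \<or> y \<le> x" by (auto simp: less_eq_cplx_def)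
  show "x \<le> y \<Longrightarrow> y \<le> x \<Longrightarrow> x = y"
  proof -
    assume "x \<le> y" "y \<le> x"
    then have "ckey x = ckey y" by (auto simp: less_eq_cplx_def prod_eq_iff)
    then show "x = y" using inj_ckey by (auto dest: injD)
  qed
qed
end

text \<open>big maximum (oplus) over a finite set of complexities; empty maximum is Pol 0\<close>
definition cMax :: "cplx set \<Rightarrow> cplx" where
  "cMax A = Max (insert (Pol 0) A)"

definition poly_bounded :: "(nat \<Rightarrow> ennreal) \<Rightarrow> nat \<Rightarrow> bool" where
  "poly_bounded f a \<longleftrightarrow> (\<exists>c N. \<forall>n\<ge>N. f n \<le> ennreal (c * real n ^ a))"

definition exp_bounded :: "(nat \<Rightarrow> ennreal) \<Rightarrow> bool" where
  "exp_bounded f \<longleftrightarrow> (\<exists>(p :: real poly) c N. \<forall>n\<ge>N. f n \<le> ennreal (c * 2 powr poly p (real n)))"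

definition dexp_bounded :: "(nat \<Rightarrow> ennreal) \<Rightarrow> bool" where
  "dexp_bounded f \<longleftrightarrow>
     (\<exists>(p :: real poly) c N. \<forall>n\<ge>N. f n \<le> ennreal (c * 2 powr (2 powr poly p (real n))))"

definition iota_fun :: "(nat \<Rightarrow> ennreal) \<Rightarrow> cplx" where
  "iota_fun f =
     (if \<exists>a. poly_bounded f a then Pol (LEAST a. poly_bounded f a)
      else if exp_bounded f then Exp
      else if dexp_bounded f then TwoExp
      else if \<forall>n. f n \<noteq> \<infinity> then Fin
      else Omega)"

definition iota :: "('f \<Rightarrow> nat) \<Rightarrow> 'f set \<Rightarrow> 'f problem \<Rightarrow> cplx" where
  "iota ar D X = iota_fun (eirc ar D (fst X) (snd X))"

section \<open>Processors and proof trees\<close>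

type_synonym 'f processor = "'f problem \<Rightarrow> cplx \<times> 'f problem set"

definition is_processor :: "('f \<Rightarrow> nat) \<Rightarrow> 'f set \<Rightarrow> 'f processor \<Rightarrow> bool" where
  "is_processor ar D proc \<longleftrightarrow>
     (\<forall>X. valid_problem ar D X \<longrightarrow>
        finite (snd (proc X)) \<and> (\<forall>Y\<in>snd (proc X). valid_problem ar D Y))"

definition children :: "(nat \<times> nat) set \<Rightarrow> nat \<Rightarrow> nat set" where
  "children E v = {w. (v, w) \<in> E}"

definition ancs :: "(nat \<times> nat) set \<Rightarrow> nat \<Rightarrow> nat set" where
  "ancs E v = {u. (u, v) \<in> E\<^sup>+}"

definition reach :: "(nat \<times> nat) set \<Rightarrow> nat \<Rightarrow> nat set" where
  "reach E v = {w. (v, w) \<in> E\<^sup>*}"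

definition proof_tree ::
  "('f \<Rightarrow> nat) \<Rightarrow> 'f set \<Rightarrow> nat set \<Rightarrow> (nat \<times> nat) set \<Rightarrow> nat
     \<Rightarrow> (nat \<Rightarrow> 'f problem) \<Rightarrow> (nat \<Rightarrow> cplx) \<Rightarrow> bool" where
  "proof_tree ar D V E r LA LC \<longleftrightarrow>
     finite V \<and> r \<in> V \<and> E \<subseteq> V \<times> V \<and>
     (\<forall>v\<in>V. (r, v) \<in> E\<^sup>*) \<and> (\<forall>u. (u, r) \<notin> E) \<and> (\<forall>v\<in>V - {r}. \<exists>!u. (u, v) \<in> E) \<and>
     (\<forall>v\<in>V. valid_problem ar D (LA v)) \<and>
     (\<forall>v\<in>V. children E v \<noteq> {} \<longrightarrow>
        (\<exists>proc. is_processor ar D proc \<and> proc (LA v) = (LC v, LA ` children E v))) \<and>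
     (\<forall>v\<in>V. children E v = {} \<longrightarrow> LC v = (if solved (LA v) then Pol 0 else Omega))"

definition well_formed ::
  "('f \<Rightarrow> nat) \<Rightarrow> 'f set \<Rightarrow> nat set \<Rightarrow> (nat \<times> nat) set \<Rightarrow> nat
     \<Rightarrow> (nat \<Rightarrow> 'f problem) \<Rightarrow> (nat \<Rightarrow> cplx) \<Rightarrow> bool" where
  "well_formed ar D V E r LA LC \<longleftrightarrow> proof_tree ar D V E r LA LC \<and>
     (\<forall>v\<in>V.
        iota ar D (LA v) \<le>
          max (cMax (LC ` ancs E v))
              (cMax ((\<lambda>w. if children E w \<noteq> {} then LC w else iota ar D (LA w)) ` reach E v)) \<and>
        iota ar D (fst (LA v), fst (LA v) - snd (LA v)) \<le> cMax (LC ` ancs E v))"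

definition sound_proc :: "('f \<Rightarrow> nat) \<Rightarrow> 'f set \<Rightarrow> 'f processor \<Rightarrow> bool" where
  "sound_proc ar D proc \<longleftrightarrow>
     (\<forall>V E r LA LC. well_formed ar D V E r LA LC \<longrightarrow>
        (\<forall>v\<in>V.
           iota ar D (LA v) \<le>
             max (cMax (LC ` ancs E v))
                 (max (fst (proc (LA v))) (cMax (iota ar D ` snd (proc (LA v))))) \<and>
           (\<forall>Y\<in>snd (proc (LA v)).
              iota ar D (fst Y, fst Y - snd Y) \<le> max (cMax (LC ` ancs E v)) (fst (proc (LA v))))))"

end

theory Submission
  imports Defs
begin

(* Attaching the new leaves w_i below the leaf v changes the tree in a controlled way: old nodes
   keep their ancestors, the ancestors of w_i are v and the ancestors of v, and a node whose
   subtree contains v now also reaches every w_i.  At w_i the ancestor condition is soundness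
   condition (2) of the processor, and the subtree condition is trivial since w_i is a leaf.  At an
   old node x the ancestor condition is unchanged and the subtree bound can only grow: the only
   contribution that disappears is the complexity of L_A(v) at the former leaf v, and soundness
   condition (1) bounds it by c = L_C(v), the complexities of the new leaves and the labels of the
   ancestors of v, each of which is an ancestor of x or an inner node in the subtree of x. *)

lemma Pol_0_least: "Pol 0 \<le> (x::cplx)"
  by (cases x) (auto simp: less_eq_cplx_def)

lemma cMax_upper: "finite A \<Longrightarrow> a \<in> A \<Longrightarrow> a \<le> cMax A"
  unfolding cMax_def by simp

lemma cMax_le_iff: "finite A \<Longrightarrow> cMax A \<le> y \<longleftrightarrow> (\<forall>a\<in>A. a \<le> y)"
  unfolding cMax_def using Pol_0_least by simp

lemma cMax_insert: "finite A \<Longrightarrow> cMax (insert a A) = max a (cMax A)"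
  unfolding cMax_def by (simp add: insert_commute)

lemma rtrancl_Un_pendant_edges:
  assumes "W \<inter> Domain E = {}"
  shows "(E \<union> {v} \<times> W)\<^sup>* = E\<^sup>* \<union> E\<^sup>* O ({v} \<times> W)"
proof
  show "(E \<union> {v} \<times> W)\<^sup>* \<subseteq> E\<^sup>* \<union> E\<^sup>* O ({v} \<times> W)"
  proof (rule subrelI)
    fix a b assume "(a, b) \<in> (E \<union> {v} \<times> W)\<^sup>*"
    then show "(a, b) \<in> E\<^sup>* \<union> E\<^sup>* O ({v} \<times> W)"
      by induction (use assms in \<open>auto intro: rtrancl_into_rtrancl\<close>)
  qed
  show "E\<^sup>* \<union> E\<^sup>* O ({v} \<times> W) \<subseteq> (E \<union> {v} \<times> W)\<^sup>*"
    using rtrancl_mono[of E "E \<union> {v} \<times> W"] by (auto intro: rtrancl_into_rtrancl)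
qed

lemma reach_Un_pendant_edges:
  "W \<inter> Domain E = {} \<Longrightarrow>
     reach (E \<union> {v} \<times> W) x = reach E x \<union> (if v \<in> reach E x then W else {})"
  by (auto simp: reach_def rtrancl_Un_pendant_edges)

lemma reach_outside_Domain: "x \<notin> Domain E \<Longrightarrow> reach E x = {x}"
  by (auto simp: reach_def elim: converse_rtranclE)

lemma ancs_Un_pendant_edges_old:
  assumes "W \<inter> Domain E = {}" and "y \<notin> W"
  shows "ancs (E \<union> {v} \<times> W) y = ancs E y"
proof
  show "ancs (E \<union> {v} \<times> W) y \<subseteq> ancs E y"
  proof
    fix u assume "u \<in> ancs (E \<union> {v} \<times> W) y"
    then obtain z where uz: "(u, z) \<in> (E \<union> {v} \<times> W)\<^sup>*" and zy: "(z, y) \<in> E \<union> {v} \<times> W"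
      by (auto simp: ancs_def dest: tranclD2)
    from zy assms have "(z, y) \<in> E" and "z \<notin> W" by auto
    with uz have "(u, z) \<in> E\<^sup>*"
      unfolding rtrancl_Un_pendant_edges[OF assms(1)] by blast
    with \<open>(z, y) \<in> E\<close> show "u \<in> ancs E y" by (simp add: ancs_def rtrancl_into_trancl1)
  qed
  show "ancs E y \<subseteq> ancs (E \<union> {v} \<times> W) y"
    unfolding ancs_def using trancl_mono[of _ E "E \<union> {v} \<times> W"] by blast
qed

lemma ancs_Un_pendant_edges_new:
  assumes "W \<inter> Field E = {}" and "v \<notin> W" and "y \<in> W"
  shows "ancs (E \<union> {v} \<times> W) y = insert v (ancs E v)"
proof -
  let ?E = "E \<union> {v} \<times> W"
  have ancs_v: "ancs ?E v = ancs E v"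
    using assms(1,2) by (intro ancs_Un_pendant_edges_old) (auto simp: Field_def)
  have "(u, y) \<in> ?E\<^sup>+ \<longleftrightarrow> (u, v) \<in> ?E\<^sup>*" for u
  proof
    assume "(u, y) \<in> ?E\<^sup>+"
    then obtain z where "(u, z) \<in> ?E\<^sup>*" and "(z, y) \<in> ?E" by (auto dest: tranclD2)
    moreover from \<open>(z, y) \<in> ?E\<close> assms(1,3) have "z = v" by (auto simp: Field_def)
    ultimately show "(u, v) \<in> ?E\<^sup>*" by simp
  next
    assume "(u, v) \<in> ?E\<^sup>*"
    with assms(3) show "(u, y) \<in> ?E\<^sup>+" by (auto intro: rtrancl_into_trancl1)
  qed
  then show ?thesis
    using ancs_v by (auto simp: ancs_def rtrancl_eq_or_trancl)
qed

lemma children_Un_pendant_edges: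
  "children (E \<union> {v} \<times> W) x = children E x \<union> (if x = v then W else {})"
  by (auto simp: children_def)

lemma ancs_of_descendant:
  assumes parent_unique: "\<And>a b z. (a, z) \<in> E \<Longrightarrow> (b, z) \<in> E \<Longrightarrow> a = b"
    and "y \<in> reach E x"
  shows "ancs E y \<subseteq> ancs E x \<union> reach E x"
proof -
  have "(x, y) \<in> E\<^sup>*" using assms(2) by (simp add: reach_def)
  then show ?thesis
  proof induction
    case base then show ?case by simp
  next
    case (step y z)
    show ?case
    proof
      fix u assume "u \<in> ancs E z"
      then obtain p where "(u, p) \<in> E\<^sup>*" and "(p, z) \<in> E"
        by (auto simp: ancs_def dest: tranclD2)
      with step.hyps parent_unique have "(u, y) \<in> E\<^sup>*" by blast
      with step.hyps(1) step.IH show "u \<in> ancs E x \<union> reach E x"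
        by (auto simp: ancs_def reach_def rtrancl_eq_or_trancl)
    qed
  qed
qed

lemma ancs_subset: "E \<subseteq> V \<times> V \<Longrightarrow> ancs E x \<subseteq> V"
  by (auto simp: ancs_def dest: tranclD)

lemma reach_subset: "E \<subseteq> V \<times> V \<Longrightarrow> reach E x \<subseteq> insert x V"
  by (auto simp: reach_def elim: rtranclE)

lemma childless_notin_ancs: "children E v = {} \<Longrightarrow> v \<notin> ancs E x"
  by (auto simp: ancs_def children_def dest: tranclD)

lemma proof_tree_parent_unique:
  "proof_tree ar D V E r LA LC \<Longrightarrow> (a, z) \<in> E \<Longrightarrow> (b, z) \<in> E \<Longrightarrow> a = b"
  unfolding proof_tree_def by blast

definition node_cplx ::
  "('f \<Rightarrow> nat) \<Rightarrow> 'f set \<Rightarrow> (nat \<times> nat) set \<Rightarrow> (nat \<Rightarrow> 'f problem) \<Rightarrow> (nat \<Rightarrow> cplx) \<Rightarrow> nat \<Rightarrow> cplx"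
  where "node_cplx ar D E LA LC u = (if children E u \<noteq> {} then LC u else iota ar D (LA u))"

definition cplx_bound ::
  "('f \<Rightarrow> nat) \<Rightarrow> 'f set \<Rightarrow> (nat \<times> nat) set \<Rightarrow> (nat \<Rightarrow> 'f problem) \<Rightarrow> (nat \<Rightarrow> cplx) \<Rightarrow> nat \<Rightarrow> cplx"
  where "cplx_bound ar D E LA LC x =
    max (cMax (LC ` ancs E x)) (cMax (node_cplx ar D E LA LC ` reach E x))"

lemma well_formed_iff:
  "well_formed ar D V E r LA LC \<longleftrightarrow> proof_tree ar D V E r LA LC \<and>
     (\<forall>x\<in>V. iota ar D (LA x) \<le> cplx_bound ar D E LA LC x \<and>
        iota ar D (fst (LA x), fst (LA x) - snd (LA x)) \<le> cMax (LC ` ancs E x))"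
  unfolding well_formed_def cplx_bound_def node_cplx_def ..

lemma cplx_bound_upper_ancs:
  "finite (ancs E x) \<Longrightarrow> u \<in> ancs E x \<Longrightarrow> LC u \<le> cplx_bound ar D E LA LC x"
  unfolding cplx_bound_def by (simp add: cMax_upper le_max_iff_disj)

lemma cplx_bound_upper_reach:
  "finite (reach E x) \<Longrightarrow> u \<in> reach E x \<Longrightarrow>
     node_cplx ar D E LA LC u \<le> cplx_bound ar D E LA LC x"
  unfolding cplx_bound_def by (simp add: cMax_upper le_max_iff_disj)

locale leaf_expansion =
  fixes ar :: "'f \<Rightarrow> nat" and D :: "'f set"
    and V :: "nat set" and E :: "(nat \<times> nat) set" and r :: nat
    and LA :: "nat \<Rightarrow> 'f problem" and LC :: "nat \<Rightarrow> cplx"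
    and v :: nat and proc :: "'f processor" and c :: cplx and Q :: "'f problem set"
    and w :: "'f problem \<Rightarrow> nat"
  assumes well_formed: "well_formed ar D V E r LA LC"
    and leaf: "v \<in> V" "children E v = {}"
    and processor: "is_processor ar D proc" "sound_proc ar D proc" "proc (LA v) = (c, Q)"
    and expands: "Q \<noteq> {}"
    and fresh: "inj_on w Q" "w ` Q \<inter> V = {}"
begin

definition E' :: "(nat \<times> nat) set" where
  "E' = E \<union> {v} \<times> w ` Q"

definition LA' :: "nat \<Rightarrow> 'f problem" where
  "LA' = (\<lambda>x. if x \<in> w ` Q then inv_into Q w x else LA x)"

definition LC' :: "nat \<Rightarrow> cplx" where
  "LC' = (\<lambda>x. if x = v then c
              else if x \<in> w ` Q then (if solved (inv_into Q w x) then Pol 0 else Omega)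
              else LC x)"

lemma proof_tree: "proof_tree ar D V E r LA LC"
  using well_formed by (simp add: well_formed_def)

lemma finite_V: "finite V" and root: "r \<in> V" and edges: "E \<subseteq> V \<times> V"
  and valid: "\<And>x. x \<in> V \<Longrightarrow> valid_problem ar D (LA x)"
  using proof_tree by (auto simp: proof_tree_def)

lemma fresh_Field: "w ` Q \<inter> Field E = {}"
  using fresh(2) edges by (auto simp: Field_def)

lemma leaf_not_fresh: "v \<notin> w ` Q"
  using leaf(1) fresh(2) by auto

lemma finite_Q: "finite Q" and valid_Q: "Y \<in> Q \<Longrightarrow> valid_problem ar D Y"
proof -
  have "finite (snd (proc (LA v)))" and "\<forall>Y\<in>snd (proc (LA v)). valid_problem ar D Y"
    using processor(1) valid[OF leaf(1)] unfolding is_processor_def by blast+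
  then show "finite Q" and "Y \<in> Q \<Longrightarrow> valid_problem ar D Y"
    using processor(3) by simp_all
qed

lemma edges': "E' \<subseteq> (V \<union> w ` Q) \<times> (V \<union> w ` Q)"
  using edges leaf(1) by (auto simp: E'_def)

lemma finite_V': "finite (V \<union> w ` Q)"
  using finite_V finite_Q by simp

lemma finite_ancs: "finite (ancs E x)"
  using ancs_subset[OF edges] finite_V by (rule finite_subset)

lemma finite_reach: "finite (reach E x)"
  using reach_subset[OF edges] finite_V by (meson finite_insert finite_subset)

lemma finite_ancs': "finite (ancs E' x)"
  using ancs_subset[OF edges'] finite_V' by (rule finite_subset)

lemma finite_reach': "finite (reach E' x)"
  using reach_subset[OF edges'] finite_V' by (meson finite_insert finite_subset)

lemma ancs'_old: "x \<notin> w ` Q \<Longrightarrow> ancs E' x = ancs E x"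
  unfolding E'_def using fresh_Field by (intro ancs_Un_pendant_edges_old) (auto simp: Field_def)

lemma ancs'_new: "q \<in> Q \<Longrightarrow> ancs E' (w q) = insert v (ancs E v)"
  unfolding E'_def using fresh_Field leaf_not_fresh by (intro ancs_Un_pendant_edges_new) auto

lemma reach'_old: "reach E' x = reach E x \<union> (if v \<in> reach E x then w ` Q else {})"
  unfolding E'_def using fresh_Field by (intro reach_Un_pendant_edges) (auto simp: Field_def)

lemma reach'_new: "q \<in> Q \<Longrightarrow> reach E' (w q) = {w q}"
proof -
  assume "q \<in> Q"
  then have "w q \<notin> Domain E" and "v \<noteq> w q" using fresh_Field leaf_not_fresh by (auto simp: Field_def)
  then show ?thesis by (simp add: reach'_old reach_outside_Domain)
qed

lemma children': "children E' x = (if x = v then w ` Q else children E x)"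
  unfolding E'_def children_Un_pendant_edges using leaf(2) by simp

lemma children'_new: "q \<in> Q \<Longrightarrow> children E' (w q) = {}"
proof -
  assume "q \<in> Q"
  then have "w q \<noteq> v" and "w q \<notin> Domain E"
    using fresh_Field leaf_not_fresh by (auto simp: Field_def)
  then show ?thesis by (auto simp: children_def E'_def)
qed

lemma LA'_old: "x \<in> V \<Longrightarrow> LA' x = LA x"
  using fresh(2) by (auto simp: LA'_def)

lemma LA'_new: "q \<in> Q \<Longrightarrow> LA' (w q) = q"
  using fresh(1) by (simp add: LA'_def)

lemma LC'_old: "x \<in> V \<Longrightarrow> x \<noteq> v \<Longrightarrow> LC' x = LC x"
  using fresh(2) by (auto simp: LC'_def)

lemma LC'_leaf: "LC' v = c"
  by (simp add: LC'_def)

lemma LC'_ancs: "u \<in> ancs E x \<Longrightarrow> LC' u = LC u"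
  using ancs_subset[OF edges] childless_notin_ancs[OF leaf(2)] by (blast intro: LC'_old)

lemma LC'_ancs'_old: "x \<in> V \<Longrightarrow> LC' ` ancs E' x = LC ` ancs E x"
proof -
  assume "x \<in> V"
  then have "x \<notin> w ` Q" using fresh(2) by auto
  then show ?thesis by (simp add: ancs'_old LC'_ancs cong: image_cong)
qed

lemma node_cplx'_old:
  "u \<in> V \<Longrightarrow> u \<noteq> v \<Longrightarrow> node_cplx ar D E' LA' LC' u = node_cplx ar D E LA LC u"
  by (simp add: node_cplx_def children' LA'_old LC'_old)

lemma node_cplx'_leaf: "node_cplx ar D E' LA' LC' v = c"
  using expands by (simp add: node_cplx_def children' LC'_leaf)

lemma node_cplx'_new: "q \<in> Q \<Longrightarrow> node_cplx ar D E' LA' LC' (w q) = iota ar D q"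
  by (simp add: node_cplx_def children'_new LA'_new)

lemma reach'_root: "y \<in> V \<union> w ` Q \<Longrightarrow> (r, y) \<in> E'\<^sup>*"
proof -
  assume "y \<in> V \<union> w ` Q"
  moreover have "V \<subseteq> reach E r" using proof_tree by (auto simp: proof_tree_def reach_def)
  ultimately have "y \<in> reach E' r" using leaf(1) by (auto simp: reach'_old)
  then show ?thesis by (simp add: reach_def)
qed

lemma parent'_unique: "y \<in> V \<union> w ` Q - {r} \<Longrightarrow> \<exists>!u. (u, y) \<in> E'"
proof (cases "y \<in> V")
  case True
  assume "y \<in> V \<union> w ` Q - {r}"
  moreover have "(u, y) \<in> E' \<longleftrightarrow> (u, y) \<in> E" for u using True fresh(2) by (auto simp: E'_def)
  ultimately show ?thesis using proof_tree True by (simp add: proof_tree_def)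
next
  case False
  assume "y \<in> V \<union> w ` Q - {r}"
  then have "(u, y) \<in> E' \<longleftrightarrow> u = v" for u using False edges by (auto simp: E'_def)
  then show ?thesis by simp
qed

lemma inner_node'_processor:
  assumes "y \<in> V \<union> w ` Q" and "children E' y \<noteq> {}"
  shows "\<exists>proc. is_processor ar D proc \<and> proc (LA' y) = (LC' y, LA' ` children E' y)"
proof (cases "y = v")
  case True
  have "LA' ` w ` Q = Q" by (force simp: LA'_new)
  then show ?thesis using True processor(1,3) leaf(1) by (auto simp: LA'_old LC'_leaf children')
next
  case False
  with assms have "y \<in> V" by (auto simp: children'_new)
  moreover have "LA' ` children E y = LA ` children E y"
    using edges by (intro image_cong) (auto simp: children_def LA'_old)
  ultimately show ?thesis
    using proof_tree False assms(2) by (auto simp: proof_tree_def children' LA'_old LC'_old)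
qed

lemma proof_tree': "proof_tree ar D (V \<union> w ` Q) E' r LA' LC'"
  unfolding proof_tree_def
proof (intro conjI ballI allI impI finite_V' edges' reach'_root parent'_unique inner_node'_processor)
  show "r \<in> V \<union> w ` Q" using root by simp
next
  fix u show "(u, r) \<notin> E'"
    using proof_tree fresh(2) root by (auto simp: proof_tree_def E'_def)
next
  fix y assume "y \<in> V \<union> w ` Q"
  then show "valid_problem ar D (LA' y)" using valid valid_Q by (auto simp: LA'_old LA'_new)
next
  fix y assume y: "y \<in> V \<union> w ` Q" and "children E' y = {}"
  then have "y \<noteq> v" using expands by (auto simp: children')
  with y \<open>children E' y = {}\<close> show "LC' y = (if solved (LA' y) then Pol 0 else Omega)"
    using proof_tree by (auto simp: proof_tree_def children' LA'_old LC'_old LA'_def LC'_def)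
qed

lemma sound_at_leaf:
  "iota ar D (LA v) \<le> max (cMax (LC ` ancs E v)) (max c (cMax (iota ar D ` Q)))"
  "Y \<in> Q \<Longrightarrow> iota ar D (fst Y, fst Y - snd Y) \<le> max (cMax (LC ` ancs E v)) c"
  using processor(2,3) well_formed leaf(1) unfolding sound_proc_def by (metis fst_conv snd_conv)+

lemma new_node_bounds:
  assumes "q \<in> Q"
  shows "iota ar D (LA' (w q)) \<le> cplx_bound ar D E' LA' LC' (w q)"
    and "iota ar D (fst (LA' (w q)), fst (LA' (w q)) - snd (LA' (w q))) \<le> cMax (LC' ` ancs E' (w q))"
proof -
  have "node_cplx ar D E' LA' LC' (w q) \<le> cplx_bound ar D E' LA' LC' (w q)"
    using assms by (intro cplx_bound_upper_reach finite_reach') (simp add: reach'_new)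
  then show "iota ar D (LA' (w q)) \<le> cplx_bound ar D E' LA' LC' (w q)"
    using assms by (simp add: node_cplx'_new LA'_new)
  have "LC' ` ancs E' (w q) = insert c (LC ` ancs E v)"
    using assms by (simp add: ancs'_new LC'_leaf LC'_ancs cong: image_cong)
  then show "iota ar D (fst (LA' (w q)), fst (LA' (w q)) - snd (LA' (w q))) \<le> cMax (LC' ` ancs E' (w q))"
    using sound_at_leaf(2)[OF assms] finite_ancs assms
    by (simp add: LA'_new cMax_insert max.commute)
qed

lemma leaf_bound:
  assumes "x \<in> V" and "v \<in> reach E x"
  shows "iota ar D (LA v) \<le> cplx_bound ar D E' LA' LC' x"
proof -
  let ?B = "cplx_bound ar D E' LA' LC' x"
  have reach_ext: "reach E x \<union> w ` Q \<subseteq> reach E' x"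
    using assms(2) by (auto simp: reach'_old)
  have upper_reach: "node_cplx ar D E' LA' LC' u \<le> ?B" if "u \<in> reach E' x" for u
    using that by (intro cplx_bound_upper_reach finite_reach')
  have upper_ancs: "LC' u \<le> ?B" if "u \<in> ancs E' x" for u
    using that by (intro cplx_bound_upper_ancs finite_ancs')
  have "c \<le> ?B"
    using upper_reach[of v] reach_ext assms(2) by (auto simp: node_cplx'_leaf)
  moreover have "iota ar D q \<le> ?B" if "q \<in> Q" for q
  proof -
    have "w q \<in> reach E' x" using that reach_ext by blast
    then show ?thesis using upper_reach node_cplx'_new[OF that] by metis
  qed
  then have "cMax (iota ar D ` Q) \<le> ?B"
    using finite_Q by (simp add: cMax_le_iff)
  moreover have "LC a \<le> ?B" if a: "a \<in> ancs E v" for a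
  proof -
    have "a \<in> ancs E x \<union> reach E x"
      using a ancs_of_descendant[OF _ assms(2)] proof_tree_parent_unique[OF proof_tree] by blast
    then show ?thesis
    proof
      assume "a \<in> ancs E x"
      then show ?thesis
        using upper_ancs[of a] ancs'_old[of x] LC'_ancs[of a x] fresh(2) assms(1) by auto
    next
      assume "a \<in> reach E x"
      have "children E a \<noteq> {}" using a by (auto simp: ancs_def children_def dest: tranclD)
      moreover have "a \<in> V" and "a \<noteq> v"
        using a ancs_subset[OF edges] childless_notin_ancs[OF leaf(2)] by auto
      ultimately have "node_cplx ar D E' LA' LC' a = LC a"
        by (subst node_cplx'_old) (simp_all add: node_cplx_def)
      then show ?thesis using upper_reach[of a] reach_ext \<open>a \<in> reach E x\<close> by auto
    qed
  qed
  then have "cMax (LC ` ancs E v) \<le> ?B"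
    using finite_ancs by (simp add: cMax_le_iff)
  ultimately show ?thesis
    using sound_at_leaf(1) by (meson max.bounded_iff order_trans)
qed

lemma cplx_bound_le_cplx_bound':
  assumes "x \<in> V"
  shows "cplx_bound ar D E LA LC x \<le> cplx_bound ar D E' LA' LC' x"
proof -
  let ?B = "cplx_bound ar D E' LA' LC' x"
  have "node_cplx ar D E LA LC u \<le> ?B" if u: "u \<in> reach E x" for u
  proof (cases "u = v")
    case True
    then show ?thesis using leaf(2) leaf_bound[OF assms] u by (simp add: node_cplx_def)
  next
    case False
    have "u \<in> V" using u reach_subset[OF edges] assms by blast
    moreover have "u \<in> reach E' x" using u by (simp add: reach'_old)
    ultimately show ?thesis using False
      by (auto simp: node_cplx'_old[symmetric] intro: cplx_bound_upper_reach finite_reach')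
  qed
  moreover have "cMax (LC ` ancs E x) \<le> ?B"
    using LC'_ancs'_old[OF assms] by (simp add: cplx_bound_def)
  ultimately show ?thesis
    using finite_reach by (simp add: cplx_bound_def[of ar D E] cMax_le_iff)
qed

theorem well_formed': "well_formed ar D (V \<union> w ` Q) E' r LA' LC'"
  unfolding well_formed_iff
proof (rule conjI[OF proof_tree'], intro ballI)
  fix x assume "x \<in> V \<union> w ` Q"
  then show "iota ar D (LA' x) \<le> cplx_bound ar D E' LA' LC' x \<and>
      iota ar D (fst (LA' x), fst (LA' x) - snd (LA' x)) \<le> cMax (LC' ` ancs E' x)"
  proof
    assume x: "x \<in> V"
    then show ?thesis
      using well_formed cplx_bound_le_cplx_bound'[OF x]
      by (auto simp: well_formed_iff LA'_old LC'_ancs'_old intro: order_trans)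
  next
    assume "x \<in> w ` Q"
    then show ?thesis using new_node_bounds by auto
  qed
qed

end

theorem mainTheorem3:
  fixes ar :: "'f::finite \<Rightarrow> nat" and D :: "'f set"
    and V :: "nat set" and E :: "(nat \<times> nat) set" and r :: nat
    and LA :: "nat \<Rightarrow> 'f problem" and LC :: "nat \<Rightarrow> cplx"
    and v :: nat and proc :: "'f processor" and c :: cplx and Q :: "'f problem set"
    and w :: "'f problem \<Rightarrow> nat"
  assumes "well_formed ar D V E r LA LC"
    and "v \<in> V" and "children E v = {}" and "\<not> solved (LA v)"
    and "is_processor ar D proc" and "sound_proc ar D proc"
    and "proc (LA v) = (c, Q)"
    and "Q \<noteq> {} \<or> c = Omega"
    and "inj_on w Q" and "w ` Q \<inter> V = {}"
  shows "well_formed ar D (V \<union> w ` Q) (E \<union> (\<lambda>q. (v, w q)) ` Q) r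
           (\<lambda>x. if x \<in> w ` Q then inv_into Q w x else LA x)
           (\<lambda>x. if x = v then c
                else if x \<in> w ` Q then (if solved (inv_into Q w x) then Pol 0 else Omega)
                else LC x)"
proof (cases "Q = {}")
  case True
  have "LC v = Omega"
    using assms(1-4) by (simp add: well_formed_def proof_tree_def)
  with assms(8) True have "(\<lambda>x. if x = v then c else LC x) = LC" by auto
  with assms(1) True show ?thesis by (simp only: image_empty empty_iff if_False Un_empty_right)
next
  case False
  interpret leaf_expansion ar D V E r LA LC v proc c Q w
    using assms False by unfold_locales auto
  have "(\<lambda>q. (v, w q)) ` Q = {v} \<times> w ` Q" by auto
  then show ?thesis using well_formed' by (simp add: E'_def LA'_def LC'_def)
qed

end
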